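(* For all positive integers $n$ and non-negative integers $k$, $$\det_{0\le i,j\le n-1}\Big(\sum_{l=-k}^{k+1}\binom{2i+2j}{i+j+l}\Big)= \begin{cases}(-1)^{n_1\binom{k+1}2}, & n=(k+1)n_1,\\ (-1)^{n_1\binom{k+1}2}, & n=(k+1)n_1+1,\\ 0, & n\not\equiv0,1\pmod{k+1},\end{cases}$$ with $n_1$ a non-negative integer (for $k=0$, the first case is meant).
   Context: Binomial coefficients $\binom ab$ (with $a\ge0$) are $0$ if $b<0$ or $b>a$. *)

theory Defs
  imports Main "Jordan_Normal_Form.Determinant"
begin

definition binom_int :: "nat \<Rightarrow> int \<Rightarrow> int" where
  "binom_int a b = (if 0 \<le> b \<and> b \<le> int a then int (a choose nat b) else 0)"

end

theory Submission
  imports Defs "HOL-Computational_Algebra.Formal_Laurent_Series" "HOL-Computational_Algebra.Polynomial"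
begin

text \<open>
  Put x = z + 2 + 1/z = (1 + z)(1 + 1/z). Since [z^t] x^m = binom (2m) (m + t), the matrix is
  the Hankel matrix (L (x^(i+j))) of the linear functional L f = \<Sum>[z^l] f, l = -k..k+1, on
  Laurent polynomials in z. Replacing the monomials x^a by suitable monic polynomials P_a(x),
  built from the Laurent polynomials z^j + z^-j, is a unitriangular change of basis and turns
  the Hankel matrix into the Gram matrix (L (P_a P_b)). With K = k + 1 this Gram matrix is
  block diagonal with blocks of size K: the index a = mK contributes a diagonal entry 1, and
  the other entries of a block vanish above the anti-diagonal and are -1 on it. So every
  complete block has determinant (-1)^(K choose 2), whereas an incomplete last block of size
  at least 2 has a zero row.
\<close>

section \<open>Laurent polynomials in z\<close>

definition zpow :: "int \<Rightarrow> int fls" where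
  "zpow i = fls_X_intpow i"

lemma fls_nth_zpow [simp]: "fls_nth (zpow i) t = (if t = i then 1 else 0)"
  by (simp add: zpow_def)

lemma zpow_mult_zpow [simp]: "zpow i * zpow j = zpow (i + j)"
  unfolding zpow_def by (rule fls_X_intpow_times_fls_X_intpow)

lemma zpow_mult_zpow_mult [simp]: "zpow i * (zpow j * f) = zpow (i + j) * f"
  by (simp add: mult.assoc[symmetric])

lemma fls_nth_mult_zpow [simp]: "fls_nth (f * zpow i) t = fls_nth f (t - i)"
  unfolding zpow_def using fls_X_intpow_times_conv_shift(2)[of f i] by simp

lemma fls_nth_zpow_mult [simp]: "fls_nth (zpow i * f) t = fls_nth f (t - i)"
  using fls_nth_mult_zpow[of f i t] by (simp add: mult.commute)

lemma zpow_eq_iff [simp]: "zpow a = zpow b \<longleftrightarrow> a = b"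
  by (metis fls_nth_zpow zero_neq_one)

lemma zpow_0 [simp]: "zpow 0 = 1"
  by (simp add: zpow_def)

lemma zpow_plus_1_nonzero:
  assumes "a \<noteq> 0"
  shows "zpow a + 1 \<noteq> 0"
proof
  assume "zpow a + 1 = 0"
  then have "fls_nth (zpow a + 1) 0 = 0" by simp
  with assms show False by simp
qed

lemma zpow_1_minus_1_nonzero: "zpow 1 - 1 \<noteq> 0"
proof
  assume "zpow 1 - 1 = 0"
  then have "fls_nth (zpow 1 - 1) 1 = 0" by simp
  then show False by simp
qed

definition xz :: "int fls" where
  "xz = zpow 1 + 2 + zpow (-1)"

lemma binom_int_Suc: "binom_int (Suc a) b = binom_int a (b - 1) + binom_int a b"
proof -
  consider "b < 0" | "b = 0" | "0 < b \<and> b \<le> int a" | "b = int a + 1" | "b > int a + 1"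
    by linarith
  then show ?thesis
  proof cases
    case 3
    then have "nat b = Suc (nat (b - 1))" "nat (b - 1) < a" by auto
    then show ?thesis using 3 unfolding binom_int_def by auto
  next
    case 4
    then have "nat b = Suc a" by simp
    then show ?thesis using 4 unfolding binom_int_def by auto
  qed (auto simp: binom_int_def)
qed

lemma fls_nth_mult_xz: "fls_nth (f * xz) t = fls_nth f (t - 1) + 2 * fls_nth f t + fls_nth f (t + 1)"
proof -
  have "f * xz = f * zpow 1 + 2 * f + f * zpow (-1)" by (simp add: xz_def algebra_simps)
  then show ?thesis by (simp add: fls_mult_of_int_nth[of 2, simplified])
qed

lemma fls_nth_xz_power: "fls_nth (xz ^ m) t = binom_int (2 * m) (int m + t)"
proof (induction m arbitrary: t)
  case 0
  then show ?case by (simp add: binom_int_def xz_def)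
next
  case (Suc m)
  have "fls_nth (xz ^ Suc m) t = fls_nth (xz ^ m * xz) t" by (simp only: power_Suc2)
  also have "\<dots> = binom_int (2 * m) (int m + t - 1) + 2 * binom_int (2 * m) (int m + t)
      + binom_int (2 * m) (int m + t + 1)"
    unfolding fls_nth_mult_xz Suc.IH by (simp add: algebra_simps)
  also have "\<dots> = binom_int (2 * Suc m) (int (Suc m) + t)"
    using binom_int_Suc[of "Suc (2 * m)" "int (Suc m) + t"] binom_int_Suc[of "2 * m" "int (Suc m) + t"]
      binom_int_Suc[of "2 * m" "int (Suc m) + t - 1"]
    by (simp add: algebra_simps)
  finally show ?case .
qed

section \<open>The moment functional\<close>

definition weight :: "nat \<Rightarrow> int fls" where
  "weight k = (\<Sum>l\<in>{-int k..int k + 1}. zpow (-l))"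

definition moment :: "nat \<Rightarrow> int fls \<Rightarrow> int" where
  "moment k f = fls_nth (f * weight k) 0"

lemma moment_xz_power: "moment k (xz ^ m) = (\<Sum>l\<in>{-int k..int k + 1}. binom_int (2 * m) (int m + l))"
  unfolding moment_def weight_def by (simp add: sum_distrib_left fls_nth_sum fls_nth_xz_power)

lemma moment_sum: "moment k (\<Sum>i\<in>A. f i) = (\<Sum>i\<in>A. moment k (f i))"
  unfolding moment_def by (simp add: sum_distrib_right fls_nth_sum)

lemma moment_of_int_mult: "moment k (of_int c * f) = c * moment k f"
  unfolding moment_def by (simp add: mult.assoc)

lemma sum_zpow_interval_telescope:
  "(\<Sum>l\<in>{a..a + int n - 1}. zpow (-l)) * (zpow 1 - 1) = zpow (1 - a) - zpow (1 - a - int n)"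
proof (induction n)
  case (Suc n)
  have "{a..a + int (Suc n) - 1} = insert (a + int n) {a..a + int n - 1}" by auto
  then have "(\<Sum>l\<in>{a..a + int (Suc n) - 1}. zpow (-l))
      = zpow (-(a + int n)) + (\<Sum>l\<in>{a..a + int n - 1}. zpow (-l))"
    by (simp add: sum.insert)
  then show ?case using Suc by (simp add: algebra_simps)
qed simp

lemma weight_telescope: "weight k * (zpow 1 - 1) = zpow (int k + 1) - zpow (-(int k + 1))"
  using sum_zpow_interval_telescope[of "-int k" "2 * k + 2"] unfolding weight_def
  by (simp add: algebra_simps)

section \<open>Integer polynomials evaluated at x\<close>

lemma map_poly_of_int_add:
  "map_poly (of_int :: int \<Rightarrow> 'a::comm_ring_1) (p + q) = map_poly of_int p + map_poly of_int q"
  by (rule poly_eqI) (simp add: coeff_map_poly)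

lemma map_poly_of_int_diff:
  "map_poly (of_int :: int \<Rightarrow> 'a::comm_ring_1) (p - q) = map_poly of_int p - map_poly of_int q"
  by (rule poly_eqI) (simp add: coeff_map_poly)

lemma map_poly_of_int_mult:
  "map_poly (of_int :: int \<Rightarrow> 'a::comm_ring_1) (p * q) = map_poly of_int p * map_poly of_int q"
  by (rule poly_eqI) (simp add: coeff_map_poly coeff_mult of_int_sum)

lemma map_poly_of_int_smult:
  "map_poly (of_int :: int \<Rightarrow> 'a::comm_ring_1) (smult c p) = smult (of_int c) (map_poly of_int p)"
  by (rule poly_eqI) (simp add: coeff_map_poly)

definition eval_xz :: "int poly \<Rightarrow> int fls" where
  "eval_xz p = poly (map_poly of_int p) xz"

lemma eval_xz_0: "eval_xz 0 = 0"
  by (simp add: eval_xz_def)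

lemma eval_xz_1: "eval_xz 1 = 1"
  by (simp add: eval_xz_def)

lemma eval_xz_add: "eval_xz (p + q) = eval_xz p + eval_xz q"
  by (simp add: eval_xz_def map_poly_of_int_add)

lemma eval_xz_diff: "eval_xz (p - q) = eval_xz p - eval_xz q"
  by (simp add: eval_xz_def map_poly_of_int_diff)

lemma eval_xz_mult: "eval_xz (p * q) = eval_xz p * eval_xz q"
  by (simp add: eval_xz_def map_poly_of_int_mult)

lemma eval_xz_smult: "eval_xz (smult c p) = of_int c * eval_xz p"
  by (simp add: eval_xz_def map_poly_of_int_smult)

lemma eval_xz_sum: "eval_xz (\<Sum>d\<in>A. f d) = (\<Sum>d\<in>A. eval_xz (f d))"
  by (induction A rule: infinite_finite_induct) (auto simp: eval_xz_0 eval_xz_add)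

lemma eval_xz_const: "eval_xz [:c:] = of_int c"
  by (simp add: eval_xz_def map_poly_pCons)

lemma eval_xz_x_minus_2: "eval_xz [:-2, 1:] = zpow 1 + zpow (-1)"
  by (simp add: eval_xz_def xz_def map_poly_pCons)

lemma eval_xz_eq_sum_powers:
  assumes "degree p < n"
  shows "eval_xz p = (\<Sum>r<n. of_int (coeff p r) * xz ^ r)"
proof -
  have "degree (map_poly (of_int :: int \<Rightarrow> int fls) p) < n"
    using map_poly_degree_leq assms by (rule le_less_trans)
  then have "eval_xz p = (\<Sum>r<n. coeff (map_poly (of_int :: int \<Rightarrow> int fls) p) r * xz ^ r)"
    unfolding eval_xz_def poly_altdef by (intro sum.mono_neutral_left) (auto simp: coeff_eq_0)
  then show ?thesis by (simp add: coeff_map_poly)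
qed

lemma fls_nth_eval_xz_above_degree:
  assumes "int (degree p) < s"
  shows "fls_nth (eval_xz p) s = 0"
proof -
  have "eval_xz p = (\<Sum>r<Suc (degree p). of_int (coeff p r) * xz ^ r)"
    by (rule eval_xz_eq_sum_powers) simp
  then show ?thesis using assms by (simp add: fls_nth_sum fls_nth_xz_power binom_int_def)
qed

definition monic_deg :: "nat \<Rightarrow> int poly \<Rightarrow> bool" where
  "monic_deg a p \<longleftrightarrow> degree p = a \<and> lead_coeff p = 1"

lemma monic_deg_coeff_above: "monic_deg a p \<Longrightarrow> a < j \<Longrightarrow> coeff p j = 0"
  by (simp add: monic_deg_def coeff_eq_0)

lemma monic_deg_coeff: "monic_deg a p \<Longrightarrow> coeff p a = 1"
  by (auto simp: monic_deg_def)

lemma monic_deg_1: "monic_deg 0 1"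
  by (simp add: monic_deg_def)

lemma monic_deg_mult: "monic_deg a p \<Longrightarrow> monic_deg b q \<Longrightarrow> monic_deg (a + b) (p * q)"
  unfolding monic_deg_def by (metis degree_mult_eq lead_coeff_mult leading_coeff_0_iff mult_1 zero_neq_one)

lemma monic_deg_add_lower: "monic_deg a p \<Longrightarrow> degree q < a \<Longrightarrow> monic_deg a (p + q)"
  unfolding monic_deg_def by (auto simp: degree_add_eq_left coeff_eq_0)

lemma monic_deg_diff_lower: "monic_deg a p \<Longrightarrow> degree q < a \<Longrightarrow> monic_deg a (p - q)"
  using monic_deg_add_lower[of a p "- q"] by simp

fun lucas_poly :: "nat \<Rightarrow> int poly" where
  "lucas_poly 0 = [:2:]"
| "lucas_poly (Suc 0) = [:-2, 1:]"
| "lucas_poly (Suc (Suc n)) = [:-2, 1:] * lucas_poly (Suc n) - lucas_poly n"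

lemma eval_xz_lucas_poly: "eval_xz (lucas_poly n) = zpow (int n) + zpow (- int n)"
proof (induction n rule: lucas_poly.induct)
  case (3 n)
  have "eval_xz (lucas_poly (Suc (Suc n)))
      = eval_xz [:-2, 1:] * eval_xz (lucas_poly (Suc n)) - eval_xz (lucas_poly n)"
    by (simp only: lucas_poly.simps eval_xz_mult eval_xz_diff)
  then show ?case by (simp del: lucas_poly.simps add: eval_xz_x_minus_2 3 algebra_simps)
qed (simp_all add: eval_xz_const eval_xz_x_minus_2)

lemma monic_deg_lucas_poly: "n \<ge> 1 \<Longrightarrow> monic_deg n (lucas_poly n)"
proof (induction n rule: lucas_poly.induct)
  case (3 n)
  have "monic_deg (1 + Suc n) ([:-2, 1:] * lucas_poly (Suc n))"
    using 3 by (intro monic_deg_mult) (auto simp: monic_deg_def)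
  moreover have "degree (lucas_poly n) < Suc (Suc n)"
    using 3 by (cases n) (auto simp: monic_deg_def)
  ultimately show ?case by (auto intro: monic_deg_diff_lower)
qed (auto simp: monic_deg_def)

fun alt_poly :: "nat \<Rightarrow> int poly" where
  "alt_poly 0 = 1"
| "alt_poly (Suc r) = lucas_poly (Suc r) - alt_poly r"

lemma monic_deg_alt_poly: "monic_deg r (alt_poly r)"
proof (induction r)
  case (Suc r)
  have "monic_deg (Suc r) (lucas_poly (Suc r))" by (rule monic_deg_lucas_poly) simp
  moreover have "degree (alt_poly r) < Suc r" using Suc by (simp add: monic_deg_def)
  ultimately show ?case by (simp add: monic_deg_diff_lower)
qed (simp add: monic_deg_1)

lemma monic_deg_alt_poly_minus_1: "r \<ge> 1 \<Longrightarrow> monic_deg r (alt_poly r - 1)"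
  using monic_deg_alt_poly[of r] by (intro monic_deg_diff_lower) auto

lemma eval_alt_poly_mult: "eval_xz (alt_poly r) * (1 + zpow 1) = zpow (int r + 1) + zpow (- int r)"
proof (induction r)
  case (Suc r)
  have "eval_xz (alt_poly (Suc r)) * (1 + zpow 1)
      = (zpow (int (Suc r)) + zpow (- int (Suc r))) * (1 + zpow 1) - eval_xz (alt_poly r) * (1 + zpow 1)"
    by (simp only: alt_poly.simps eval_xz_diff eval_xz_lucas_poly left_diff_distrib)
  then show ?case unfolding Suc by (simp add: algebra_simps)
qed (simp add: eval_xz_1)

fun lucas_step_sum :: "nat \<Rightarrow> nat \<Rightarrow> int poly" where
  "lucas_step_sum K 0 = 1"
| "lucas_step_sum K (Suc 0) = lucas_poly K"
| "lucas_step_sum K (Suc (Suc m)) = lucas_step_sum K m + lucas_poly (Suc (Suc m) * K)"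

lemma monic_deg_lucas_step_sum: "K \<ge> 1 \<Longrightarrow> monic_deg (m * K) (lucas_step_sum K m)"
proof (induction K m rule: lucas_step_sum.induct)
  case (3 K m)
  have "monic_deg (Suc (Suc m) * K) (lucas_poly (Suc (Suc m) * K))"
    using 3 by (intro monic_deg_lucas_poly) simp
  moreover have "degree (lucas_step_sum K m) < Suc (Suc m) * K" using 3 by (simp add: monic_deg_def)
  ultimately have "monic_deg (Suc (Suc m) * K) (lucas_poly (Suc (Suc m) * K) + lucas_step_sum K m)"
    by (rule monic_deg_add_lower)
  then show ?case by (simp add: add.commute)
qed (auto simp: monic_deg_1 monic_deg_lucas_poly)

lemma eval_lucas_step_sum_mult:
  "eval_xz (lucas_step_sum K m) * (zpow (int K) - zpow (- int K))
    = zpow ((int m + 1) * int K) - zpow (- ((int m + 1) * int K))"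
proof (induction K m rule: lucas_step_sum.induct)
  case (3 K m)
  have "eval_xz (lucas_step_sum K (Suc (Suc m))) * (zpow (int K) - zpow (- int K))
      = eval_xz (lucas_step_sum K m) * (zpow (int K) - zpow (- int K))
        + (zpow (int (Suc (Suc m) * K)) + zpow (- int (Suc (Suc m) * K))) * (zpow (int K) - zpow (- int K))"
    by (simp only: lucas_step_sum.simps eval_xz_add eval_xz_lucas_poly distrib_right)
  then show ?case unfolding 3 by (simp add: algebra_simps)
qed (simp_all add: eval_xz_1 eval_xz_lucas_poly algebra_simps)

fun lucas_alt_sum :: "nat \<Rightarrow> nat \<Rightarrow> int poly" where
  "lucas_alt_sum K 0 = 1"
| "lucas_alt_sum K (Suc m) = lucas_poly (Suc m * K) - lucas_alt_sum K m"

lemma monic_deg_lucas_alt_sum: "K \<ge> 1 \<Longrightarrow> monic_deg (m * K) (lucas_alt_sum K m)"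
proof (induction m)
  case (Suc m)
  have "monic_deg (Suc m * K) (lucas_poly (Suc m * K))" using Suc by (intro monic_deg_lucas_poly) simp
  moreover have "degree (lucas_alt_sum K m) < Suc m * K" using Suc by (simp add: monic_deg_def)
  ultimately show ?case by (simp add: monic_deg_diff_lower)
qed (simp add: monic_deg_1)

lemma eval_lucas_alt_sum_mult:
  "eval_xz (lucas_alt_sum K m) * (zpow (int K) + 1) = zpow ((int m + 1) * int K) + zpow (- (int m * int K))"
proof (induction m)
  case (Suc m)
  have "eval_xz (lucas_alt_sum K (Suc m)) * (zpow (int K) + 1)
      = (zpow (int (Suc m * K)) + zpow (- int (Suc m * K))) * (zpow (int K) + 1)
        - eval_xz (lucas_alt_sum K m) * (zpow (int K) + 1)"
    by (simp only: lucas_alt_sum.simps eval_xz_diff eval_xz_lucas_poly left_diff_distrib)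
  then show ?case unfolding Suc by (simp add: algebra_simps)
qed (simp add: eval_xz_1 algebra_simps)

definition gram_basis :: "nat \<Rightarrow> nat \<Rightarrow> int poly" where
  "gram_basis K a = (if a mod K = 0 then lucas_alt_sum K (a div K)
     else (alt_poly (a mod K) - 1) * lucas_step_sum K (a div K))"

lemma monic_deg_gram_basis:
  assumes "K \<ge> 1"
  shows "monic_deg a (gram_basis K a)"
proof (cases "a mod K = 0")
  case True
  then have "a = a div K * K" by (metis mult.commute mult_div_mod_eq add_0_right)
  then show ?thesis using True monic_deg_lucas_alt_sum[OF assms, of "a div K"] unfolding gram_basis_def by simp
next
  case False
  have "monic_deg (a mod K + a div K * K) ((alt_poly (a mod K) - 1) * lucas_step_sum K (a div K))"
    using False monic_deg_alt_poly_minus_1 monic_deg_lucas_step_sum[OF assms] by (intro monic_deg_mult) auto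
  then show ?thesis using False unfolding gram_basis_def by (simp add: mod_div_mult_eq add.commute)
qed

lemma sum_zpow_telescope: "(\<Sum>i<N. zpow (int i)) * (zpow 1 - 1) = zpow (int N) - 1"
  by (induction N) (simp_all add: algebra_simps)

lemma sum_zpow_step2_telescope:
  "(\<Sum>j<N. zpow (c + 2 * int j)) * (zpow 2 - 1) = zpow (c + 2 * int N) - zpow c"
  by (induction N) (simp_all add: algebra_simps)

lemma eval_lucas_alt_sum_mult_weight:
  assumes K: "K = Suc k"
  shows "eval_xz (lucas_alt_sum K m) * weight k
    = (zpow (int m * int K) + zpow (- ((int m + 1) * int K))) * (\<Sum>i<K. zpow (int i))"
proof -
  let ?D = "(zpow (int K) + 1) * (zpow 1 - 1)"
  have D: "?D \<noteq> 0" using zpow_plus_1_nonzero[of "int K"] zpow_1_minus_1_nonzero K by simp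
  have "eval_xz (lucas_alt_sum K m) * weight k * ?D
      = (eval_xz (lucas_alt_sum K m) * (zpow (int K) + 1)) * (weight k * (zpow 1 - 1))"
    by (simp add: algebra_simps)
  also have "\<dots> = (zpow ((int m + 1) * int K) + zpow (- (int m * int K))) * (zpow (int K) - zpow (- int K))"
    unfolding eval_lucas_alt_sum_mult weight_telescope K by (simp add: algebra_simps)
  also have "\<dots> = (zpow (int m * int K) + zpow (- ((int m + 1) * int K))) * (zpow (int K) - 1) * (zpow (int K) + 1)"
    by (simp add: algebra_simps)
  also have "\<dots> = (zpow (int m * int K) + zpow (- ((int m + 1) * int K))) * (\<Sum>i<K. zpow (int i)) * ?D"
    unfolding sum_zpow_telescope[symmetric] by (simp only: mult_ac)
  finally show ?thesis using D by simp
qed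

lemma eval_alt_step_mult_weight:
  assumes K: "K = Suc k"
  shows "eval_xz ((alt_poly r - 1) * lucas_step_sum K m) * weight k
    = (zpow (int r + 1) + zpow (- int r) - 1 - zpow 1) * (\<Sum>j<(m + 1) * K. zpow (- int ((m + 1) * K) + 2 * int j))"
proof -
  let ?D = "(1 + zpow 1) * (zpow 1 - 1)"
  have D: "?D \<noteq> 0" using zpow_plus_1_nonzero[of 1] zpow_1_minus_1_nonzero by (simp add: add.commute)
  have alt: "(eval_xz (alt_poly r) - 1) * (1 + zpow 1) = zpow (int r + 1) + zpow (- int r) - 1 - zpow 1"
    using eval_alt_poly_mult[of r] by (simp add: algebra_simps)
  have weight: "weight k * (zpow 1 - 1) = zpow (int K) - zpow (- int K)"
    using weight_telescope[of k] K by (simp add: algebra_simps)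
  have "eval_xz ((alt_poly r - 1) * lucas_step_sum K m) * weight k * ?D
      = ((eval_xz (alt_poly r) - 1) * (1 + zpow 1)) * (eval_xz (lucas_step_sum K m) * (weight k * (zpow 1 - 1)))"
    by (simp add: eval_xz_mult eval_xz_diff eval_xz_1 algebra_simps)
  also have "\<dots> = (zpow (int r + 1) + zpow (- int r) - 1 - zpow 1)
      * (zpow ((int m + 1) * int K) - zpow (- ((int m + 1) * int K)))"
    unfolding alt weight eval_lucas_step_sum_mult ..
  also have "\<dots> = (zpow (int r + 1) + zpow (- int r) - 1 - zpow 1)
      * (\<Sum>j<(m + 1) * K. zpow (- int ((m + 1) * K) + 2 * int j)) * (zpow 2 - 1)"
    unfolding mult.assoc sum_zpow_step2_telescope by (simp add: algebra_simps)
  also have "zpow 2 - 1 = ?D" by (simp add: algebra_simps)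
  finally show ?thesis using D by simp
qed

lemma fls_nth_zpow_mult_sum_zpow:
  "fls_nth (zpow a * (\<Sum>i<N. zpow (int i))) s = (if a \<le> s \<and> s < a + int N then 1 else 0)"
proof -
  have count: "(\<Sum>i<N. if s = a + int i then 1 else 0 :: int) = (if a \<le> s \<and> s < a + int N then 1 else 0)"
    by (induction N) auto
  show ?thesis
    unfolding sum_distrib_left zpow_mult_zpow fls_nth_sum fls_nth_zpow count[symmetric] ..
qed

lemma fls_nth_zpow_mult_sum_zpow_step2:
  "fls_nth (zpow a * (\<Sum>j<N. zpow (c + 2 * int j))) s
    = (if a + c \<le> s \<and> s < a + c + 2 * int N \<and> even (s - (a + c)) then 1 else 0)"
proof -
  have count: "(\<Sum>j<N. if s = a + c + 2 * int j then 1 else 0 :: int)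
      = (if a + c \<le> s \<and> s < a + c + 2 * int N \<and> even (s - (a + c)) then 1 else 0)"
  proof (induction N)
    case (Suc N)
    then show ?case by (simp, presburger)
  qed simp
  show ?thesis
    unfolding sum_distrib_left zpow_mult_zpow fls_nth_sum fls_nth_zpow count[symmetric]
    by (simp add: add.assoc)
qed

lemma fls_nth_eval_lucas_alt_sum_mult_weight:
  assumes K: "K = Suc k"
  shows "fls_nth (eval_xz (lucas_alt_sum K m) * weight k) s
    = (if int (m * K) \<le> s \<and> s < int ((m + 1) * K) then 1 else 0)
      + (if - int ((m + 1) * K) \<le> s \<and> s < - int (m * K) then 1 else 0)"
  unfolding eval_lucas_alt_sum_mult_weight[OF K] distrib_right fls_plus_nth fls_nth_zpow_mult_sum_zpow
  by (simp add: algebra_simps)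

definition step2_indicator :: "int \<Rightarrow> int \<Rightarrow> int" where
  "step2_indicator M v = (if - M \<le> v \<and> v < M \<and> even (v + M) then 1 else 0)"

lemma fls_nth_eval_alt_step_mult_weight:
  fixes K k m r :: nat
  assumes K: "K = Suc k"
  defines "M \<equiv> int ((m + 1) * K)"
  shows "fls_nth (eval_xz ((alt_poly r - 1) * lucas_step_sum K m) * weight k) s
    = step2_indicator M (s - int r - 1) + step2_indicator M (s + int r)
      - step2_indicator M s - step2_indicator M (s - 1)"
proof -
  have shifted: "fls_nth (zpow a * (\<Sum>j<(m + 1) * K. zpow (- M + 2 * int j))) s = step2_indicator M (s - a)"
    for a
  proof -
    have "(a + - M \<le> s \<and> s < a + - M + 2 * M \<and> even (s - (a + - M)))
        = (- M \<le> s - a \<and> s - a < M \<and> even (s - a + M))"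
      by presburger
    then show ?thesis
      unfolding fls_nth_zpow_mult_sum_zpow_step2 step2_indicator_def M_def[symmetric] by simp
  qed
  let ?S = "\<Sum>j<(m + 1) * K. zpow (- M + 2 * int j)"
  have "fls_nth (eval_xz ((alt_poly r - 1) * lucas_step_sum K m) * weight k) s
      = fls_nth (zpow (int r + 1) * ?S) s + fls_nth (zpow (- int r) * ?S) s
        - fls_nth (zpow 0 * ?S) s - fls_nth (zpow 1 * ?S) s"
    unfolding eval_alt_step_mult_weight[OF K] M_def by (simp add: algebra_simps)
  then show ?thesis unfolding shifted by (simp add: algebra_simps)
qed

section \<open>Gram entries\<close>

definition sym_basis :: "nat \<Rightarrow> int poly" where
  "sym_basis d = (if d = 0 then 1 else lucas_poly d)"

lemma eval_xz_sym_basis: "eval_xz (sym_basis d) = (if d = 0 then 1 else zpow (int d) + zpow (- int d))"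
  by (simp add: sym_basis_def eval_xz_1 eval_xz_lucas_poly)

lemma monic_deg_sym_basis: "monic_deg d (sym_basis d)"
  by (simp add: sym_basis_def monic_deg_1 monic_deg_lucas_poly)

lemma sym_basis_expansion:
  assumes "degree Q \<le> b"
  shows "\<exists>c. Q = (\<Sum>d\<le>b. smult (c d) (sym_basis d)) \<and> c b = coeff Q b"
  using assms
proof (induction b arbitrary: Q)
  case 0
  then have "Q = [:coeff Q 0:]" by (simp add: degree_0_id)
  then show ?case by (intro exI[of _ "\<lambda>_. coeff Q 0"]) (simp add: sym_basis_def)
next
  case (Suc b)
  define Q' where "Q' = Q - smult (coeff Q (Suc b)) (sym_basis (Suc b))"
  have "degree Q' \<le> b"
  proof (rule degree_le, intro allI impI)
    fix j assume "b < j"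
    then consider "j = Suc b" | "Suc b < j" by linarith
    then show "coeff Q' j = 0"
      by cases (use Suc.prems monic_deg_sym_basis[of "Suc b"] in
          \<open>auto simp: Q'_def monic_deg_coeff monic_deg_coeff_above coeff_eq_0\<close>)
  qed
  with Suc.IH obtain c where c: "Q' = (\<Sum>d\<le>b. smult (c d) (sym_basis d))" by blast
  define c' where "c' = c(Suc b := coeff Q (Suc b))"
  have "(\<Sum>d\<le>Suc b. smult (c' d) (sym_basis d)) = Q' + smult (coeff Q (Suc b)) (sym_basis (Suc b))"
    unfolding c c'_def by (simp add: sum.atMost_Suc)
  also have "\<dots> = Q" by (simp add: Q'_def)
  finally show ?case by (intro exI[of _ c']) (simp add: c'_def)
qed

lemma moment_mult_sym_basis_expansion:
  assumes "degree Q \<le> b"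
  obtains c where "\<And>P. moment k (P * eval_xz Q) = (\<Sum>d\<le>b. c d * moment k (P * eval_xz (sym_basis d)))"
    and "c b = coeff Q b"
    and "\<And>t. 1 \<le> t \<Longrightarrow> t \<le> b \<Longrightarrow> c t = fls_nth (eval_xz Q) (int t)"
proof -
  obtain c where c: "Q = (\<Sum>d\<le>b. smult (c d) (sym_basis d))" "c b = coeff Q b"
    using sym_basis_expansion[OF assms] by blast
  have eval: "eval_xz Q = (\<Sum>d\<le>b. of_int (c d) * eval_xz (sym_basis d))"
    by (subst c(1)) (simp add: eval_xz_sum eval_xz_smult)
  have "moment k (P * eval_xz Q) = (\<Sum>d\<le>b. c d * moment k (P * eval_xz (sym_basis d)))" for P
    unfolding eval sum_distrib_left moment_sum
    by (rule sum.cong) (simp_all add: mult.left_commute[of P] moment_of_int_mult)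
  moreover have "c t = fls_nth (eval_xz Q) (int t)" if "1 \<le> t" "t \<le> b" for t
  proof -
    have "fls_nth (eval_xz Q) (int t) = (\<Sum>d\<le>b. if d = t then c d else 0)"
      unfolding eval fls_nth_sum using that by (intro sum.cong) (auto simp: eval_xz_sym_basis)
    then show ?thesis using that by simp
  qed
  ultimately show ?thesis using that c(2) by blast
qed

lemma moment_mult_eval_sym_basis:
  "moment k (P * eval_xz (sym_basis d)) = (if d = 0 then fls_nth (P * weight k) 0
     else fls_nth (P * weight k) (- int d) + fls_nth (P * weight k) (int d))"
proof (cases "d = 0")
  case False
  then have "P * eval_xz (sym_basis d) * weight k = P * weight k * zpow (int d) + P * weight k * zpow (- int d)"
    by (simp add: eval_xz_sym_basis algebra_simps)
  then show ?thesis using False unfolding moment_def by simp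
qed (simp add: eval_xz_sym_basis moment_def)

lemma moment_lucas_alt_sum_sym_basis:
  assumes K: "K = Suc k" and d: "d \<le> m * K"
  shows "moment k (eval_xz (lucas_alt_sum K m) * eval_xz (sym_basis d)) = (if d = m * K then 1 else 0)"
proof -
  define A B where "A = int (m * K)" and "B = int ((m + 1) * K)"
  have "A < B" using K unfolding A_def B_def by simp
  moreover have "int d \<le> A" using d unfolding A_def by (simp only: of_nat_le_iff)
  moreover have "d = m * K \<longleftrightarrow> int d = A" unfolding A_def by (simp only: of_nat_eq_iff)
  ultimately show ?thesis
    unfolding moment_mult_eval_sym_basis fls_nth_eval_lucas_alt_sum_mult_weight[OF K]
      A_def[symmetric] B_def[symmetric]
    by auto
qed

lemma moment_alt_step_sym_basis:
  assumes K: "K = Suc k" and r: "1 \<le> r" "r < K" and d: "d < (m + 1) * K"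
  shows "moment k (eval_xz ((alt_poly r - 1) * lucas_step_sum K m) * eval_xz (sym_basis d))
    = (if (m + 1) * K - r \<le> d then -1 else 0)"
proof -
  define M where "M = int ((m + 1) * K)"
  define F where "F s = step2_indicator M (s - int r - 1) + step2_indicator M (s + int r)
    - step2_indicator M s - step2_indicator M (s - 1)" for s
  have "r < (m + 1) * K" using r(2) by (simp add: K)
  then have r': "1 \<le> int r" "int r < M" and d': "int d < M"
    and iff: "(m + 1) * K - r \<le> d \<longleftrightarrow> M - int r \<le> int d"
    using r(1) d unfolding M_def by linarith+
  have "F 0 = 0"
    using r' unfolding F_def step2_indicator_def by (auto; presburger)
  moreover have "F (- int d) + F (int d) = (if M - int r \<le> int d then -1 else 0)" if "d \<noteq> 0"
    using r' d' that unfolding F_def step2_indicator_def by (auto; presburger)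
  moreover have "fls_nth (eval_xz ((alt_poly r - 1) * lucas_step_sum K m) * weight k) s = F s" for s
    unfolding F_def M_def by (rule fls_nth_eval_alt_step_mult_weight[OF K])
  ultimately show ?thesis unfolding moment_mult_eval_sym_basis iff using r' by simp
qed

lemma fls_nth_eval_lucas_step_sum_above:
  "K \<ge> 1 \<Longrightarrow> int (m * K) < u \<Longrightarrow> fls_nth (eval_xz (lucas_step_sum K m)) u = 0"
  using monic_deg_lucas_step_sum[of K m] by (intro fls_nth_eval_xz_above_degree) (simp add: monic_deg_def)

lemma fls_nth_eval_lucas_step_sum_near_top:
  assumes K: "K \<ge> 1" and u: "int (m * K) - int K < u" "u \<le> int (m * K)"
  shows "fls_nth (eval_xz (lucas_step_sum K m)) u = (if u = int (m * K) then 1 else 0)"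
proof -
  let ?E = "eval_xz (lucas_step_sum K m)"
  have "fls_nth (?E * (zpow (int K) - zpow (- int K))) (u + int K) = fls_nth ?E u - fls_nth ?E (u + 2 * int K)"
    by (simp add: algebra_simps)
  moreover have "fls_nth ?E (u + 2 * int K) = 0"
    using u K by (intro fls_nth_eval_lucas_step_sum_above) auto
  ultimately have "fls_nth ?E u
      = fls_nth (zpow ((int m + 1) * int K) - zpow (- ((int m + 1) * int K))) (u + int K)"
    unfolding eval_lucas_step_sum_mult by simp
  moreover have "u + int K \<noteq> - ((int m + 1) * int K)"
  proof -
    have "0 \<le> int (m * K)" by simp
    then have "0 < u + int K" using u(1) by linarith
    then show ?thesis by (smt (verit) of_nat_0_le_iff zero_le_mult_iff)
  qed
  ultimately show ?thesis using u by (auto simp: algebra_simps)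
qed

lemma fls_nth_eval_alt_step_top:
  assumes K: "K \<ge> 1" and r: "1 \<le> r" "r < K" and i: "i < r"
  shows "fls_nth (eval_xz ((alt_poly r - 1) * lucas_step_sum K m)) (int (m * K + r - i)) = (-1) ^ i"
proof -
  let ?P = "eval_xz ((alt_poly r - 1) * lucas_step_sum K m)"
  let ?C = "eval_xz (lucas_step_sum K m)"
  have "monic_deg (r + m * K) ((alt_poly r - 1) * lucas_step_sum K m)"
    using monic_deg_alt_poly_minus_1[OF r(1)] monic_deg_lucas_step_sum[OF K] by (rule monic_deg_mult)
  then have P_above: "fls_nth ?P (int (m * K + r) + 1) = 0"
    by (intro fls_nth_eval_xz_above_degree) (simp add: monic_deg_def)
  have "?P * (1 + zpow 1) = ((eval_xz (alt_poly r) - 1) * (1 + zpow 1)) * ?C"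
    by (simp add: eval_xz_mult eval_xz_diff eval_xz_1 algebra_simps)
  also have "(eval_xz (alt_poly r) - 1) * (1 + zpow 1) = zpow (int r + 1) + zpow (- int r) - 1 - zpow 1"
    using eval_alt_poly_mult[of r] by (simp add: algebra_simps)
  finally have P_mult: "?P * (1 + zpow 1) = (zpow (int r + 1) + zpow (- int r) - 1 - zpow 1) * ?C" .
  have step: "fls_nth ?P s + fls_nth ?P (s - 1) = (if s = int (m * K + r) + 1 then 1 else 0)"
    if s: "int (m * K) + 2 \<le> s" "s \<le> int (m * K + r) + 1" for s
  proof -
    have "fls_nth ?P s + fls_nth ?P (s - 1) = fls_nth (?P * (1 + zpow 1)) s"
      by (simp add: algebra_simps)
    also have "\<dots> = fls_nth ?C (s - int r - 1) + fls_nth ?C (s + int r) - fls_nth ?C s - fls_nth ?C (s - 1)"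
      unfolding P_mult by (simp add: algebra_simps)
    also have "\<dots> = fls_nth ?C (s - int r - 1)"
      using s r K by (simp add: fls_nth_eval_lucas_step_sum_above)
    also have "\<dots> = (if s = int (m * K + r) + 1 then 1 else 0)"
      using s r by (subst fls_nth_eval_lucas_step_sum_near_top[OF K]) auto
    finally show ?thesis .
  qed
  show ?thesis
    using i
  proof (induction i)
    case 0
    then show ?case using step[of "int (m * K + r) + 1"] P_above r by simp
  next
    case (Suc i)
    have e: "int (m * K + r - i) - 1 = int (m * K + r - Suc i)" using Suc.prems by simp
    have "fls_nth ?P (int (m * K + r - i)) + fls_nth ?P (int (m * K + r - Suc i)) = 0"
      using step[of "int (m * K + r - i)", unfolded e] Suc.prems by auto
    then show ?case using Suc by simp
  qed
qed

definition gram_entry :: "nat \<Rightarrow> nat \<Rightarrow> nat \<Rightarrow> int" where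
  "gram_entry K a b =
    (if a mod K = 0 \<or> b mod K = 0 then (if a = b then 1 else 0)
     else if a div K = b div K \<and> K \<le> a mod K + b mod K
     then (if even (a mod K + b mod K - K) then -1 else 0)
     else 0)"

lemma gram_entry_commute: "gram_entry K a b = gram_entry K b a"
  unfolding gram_entry_def by (auto simp: add.commute)

lemma sum_neg_one_power_diff:
  "\<theta> \<le> b \<Longrightarrow> (\<Sum>d\<in>{\<theta>..b}. (-1::int) ^ (b - d)) = (if even (b - \<theta>) then 1 else 0)"
proof (induction b)
  case (Suc b)
  show ?case
  proof (cases "\<theta> = Suc b")
    case False
    then have \<theta>: "\<theta> \<le> b" using Suc.prems by simp
    have "(\<Sum>d\<in>{\<theta>..Suc b}. (-1::int) ^ (Suc b - d)) = 1 + (\<Sum>d\<in>{\<theta>..b}. (-1::int) ^ (Suc b - d))"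
      using \<theta> by (simp add: atLeastAtMostSuc_conv)
    also have "(\<Sum>d\<in>{\<theta>..b}. (-1::int) ^ (Suc b - d)) = - (\<Sum>d\<in>{\<theta>..b}. (-1::int) ^ (b - d))"
      by (subst sum_negf[symmetric], rule sum.cong) (auto simp: Suc_diff_le)
    finally show ?thesis using Suc.IH[OF \<theta>] \<theta> by (auto simp: Suc_diff_le)
  qed simp
qed simp

lemma moment_gram_basis_multiple:
  assumes K: "K = Suc k" and a: "a mod K = 0" and ba: "b \<le> a"
  shows "moment k (eval_xz (gram_basis K a) * eval_xz (gram_basis K b)) = (if a = b then 1 else 0)"
proof -
  have b: "monic_deg b (gram_basis K b)" using K by (simp add: monic_deg_gram_basis)
  then have "degree (gram_basis K b) \<le> b" by (simp add: monic_deg_def)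
  then obtain c where
    c: "\<And>P. moment k (P * eval_xz (gram_basis K b)) = (\<Sum>d\<le>b. c d * moment k (P * eval_xz (sym_basis d)))"
    and "c b = coeff (gram_basis K b) b"
    using moment_mult_sym_basis_expansion[where k = k] by blast
  with b have cb: "c b = 1" by (simp add: monic_deg_coeff)
  have "gram_basis K a = lucas_alt_sum K (a div K)" and "a = a div K * K"
    using a by (auto simp: gram_basis_def elim: dvdE)
  then have "moment k (eval_xz (gram_basis K a) * eval_xz (gram_basis K b))
      = (\<Sum>d\<le>b. c d * (if d = a then 1 else 0))"
    unfolding c using moment_lucas_alt_sum_sym_basis[OF K] ba by (intro sum.cong) auto
  then show ?thesis using ba cb by (auto simp: if_distrib cong: if_cong)
qed

lemma gram_entry_nonmultiple:
  assumes K: "K \<ge> 1" and a: "a mod K \<noteq> 0" and ba: "b \<le> a"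
  defines "\<theta> \<equiv> (a div K + 1) * K - a mod K"
  shows "gram_entry K a b = (if \<theta> \<le> b then (if even (b - \<theta>) then -1 else 0) else 0)"
proof -
  define m r where "m = a div K" and "r = a mod K"
  have r: "0 < r" "r < K" using a K by (auto simp: r_def)
  have a_eq: "a = m * K + r" by (simp add: m_def r_def)
  have \<theta>_eq: "\<theta> = m * K + (K - r)" unfolding \<theta>_def m_def[symmetric] r_def[symmetric] using r by simp
  show ?thesis
  proof (cases "\<theta> \<le> b")
    case True
    have b_div: "b div K = m" using True ba a_eq \<theta>_eq r by (intro div_nat_eqI) (auto simp: mult.commute)
    then have "b mod K = b - m * K" by (metis minus_div_mult_eq_mod)
    then have "b mod K \<noteq> 0" "K \<le> r + b mod K" "b - \<theta> = r + b mod K - K" using True \<theta>_eq r by auto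
    then show ?thesis using True a b_div unfolding gram_entry_def m_def r_def by auto
  next
    case False
    have "b div K \<noteq> m \<or> r + b mod K < K"
    proof (rule ccontr)
      assume "\<not> ?thesis"
      then have "b = m * K + b mod K" "K \<le> r + b mod K" using div_mult_mod_eq[of b K] by auto
      then have "\<theta> \<le> b" using \<theta>_eq by linarith
      with False show False ..
    qed
    moreover have "b mod K = 0 \<longrightarrow> a \<noteq> b" using a by auto
    ultimately show ?thesis using False a unfolding gram_entry_def m_def r_def by auto
  qed
qed

lemma moment_gram_basis_nonmultiple:
  assumes K: "K = Suc k" and a: "a mod K \<noteq> 0" and ba: "b \<le> a"
  shows "moment k (eval_xz (gram_basis K a) * eval_xz (gram_basis K b)) = gram_entry K a b"
proof -
  define m r where "m = a div K" and "r = a mod K"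
  define \<theta> where "\<theta> = (m + 1) * K - r"
  have r: "1 \<le> r" "r < K" using a K by (auto simp: r_def)
  have a_eq: "a = m * K + r" by (simp add: m_def r_def)
  have "monic_deg b (gram_basis K b)" using K by (simp add: monic_deg_gram_basis)
  then have "degree (gram_basis K b) \<le> b" by (simp add: monic_deg_def)
  then obtain c where
    c: "\<And>P. moment k (P * eval_xz (gram_basis K b)) = (\<Sum>d\<le>b. c d * moment k (P * eval_xz (sym_basis d)))"
    and c_top: "\<And>t. 1 \<le> t \<Longrightarrow> t \<le> b \<Longrightarrow> c t = fls_nth (eval_xz (gram_basis K b)) (int t)"
    using moment_mult_sym_basis_expansion[where k = k] by blast
  have "gram_basis K a = (alt_poly r - 1) * lucas_step_sum K m"
    using a unfolding gram_basis_def m_def r_def by simp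
  then have "moment k (eval_xz (gram_basis K a) * eval_xz (gram_basis K b))
      = (\<Sum>d\<le>b. if \<theta> \<le> d then - c d else 0)"
    unfolding c \<theta>_def using moment_alt_step_sym_basis[OF K r] ba a_eq r by (intro sum.cong) auto
  also have "\<dots> = (\<Sum>d\<in>{\<theta>..b}. - c d)"
    by (rule sum.mono_neutral_cong_right) auto
  finally have moment_eq: "moment k (eval_xz (gram_basis K a) * eval_xz (gram_basis K b))
      = - (\<Sum>d\<in>{\<theta>..b}. c d)" by (simp add: sum_negf)
  have entry: "gram_entry K a b = (if \<theta> \<le> b then (if even (b - \<theta>) then -1 else 0) else 0)"
    using gram_entry_nonmultiple[of K a b] a ba K unfolding \<theta>_def m_def r_def by simp
  show ?thesis
  proof (cases "\<theta> \<le> b")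
    case True
    define s where "s = b - m * K"
    have \<theta>_eq: "\<theta> = m * K + (K - r)" unfolding \<theta>_def using r by simp
    have s: "1 \<le> s" "s < K" using True ba a_eq \<theta>_eq r by (auto simp: s_def)
    have "b = s + m * K" using True \<theta>_eq by (simp add: s_def)
    then have "b div K = m" "b mod K = s" using s by simp_all
    then have "gram_basis K b = (alt_poly s - 1) * lucas_step_sum K m"
      using s unfolding gram_basis_def by simp
    then have "c d = (-1) ^ (b - d)" if "d \<in> {\<theta>..b}" for d
      using that c_top[of d] fls_nth_eval_alt_step_top[of K s "b - d" m] s r \<theta>_eq by (auto simp: s_def)
    then show ?thesis
      unfolding moment_eq entry using True by (simp add: sum_neg_one_power_diff)
  qed (simp add: moment_eq entry)
qed

lemma moment_gram_basis:
  assumes K: "K = Suc k"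
  shows "moment k (eval_xz (gram_basis K a) * eval_xz (gram_basis K b)) = gram_entry K a b"
proof -
  have ordered: "moment k (eval_xz (gram_basis K a) * eval_xz (gram_basis K b)) = gram_entry K a b"
    if "b \<le> a" for a b
    using that moment_gram_basis_multiple[OF K] moment_gram_basis_nonmultiple[OF K]
    unfolding gram_entry_def by (cases "a mod K = 0") auto
  show ?thesis
    using ordered[of b a] ordered[of a b] by (cases "b \<le> a") (auto simp: mult.commute gram_entry_commute)
qed

section \<open>Determinant of the Gram matrix\<close>

definition gram_mat :: "nat \<Rightarrow> nat \<Rightarrow> int mat" where
  "gram_mat K n = mat n n (\<lambda>(i, j). gram_entry K i j)"

lemma det_zero_above_antidiagonal:
  fixes M :: "'a :: comm_ring_1 mat"
  assumes "M \<in> carrier_mat N N"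
    and "\<And>i j. i < N \<Longrightarrow> j < N \<Longrightarrow> i + j + 1 < N \<Longrightarrow> M $$ (i, j) = 0"
  shows "det M = (-1) ^ (N choose 2) * (\<Prod>i<N. M $$ (i, N - 1 - i))"
  using assms
proof (induction N arbitrary: M)
  case 0
  then show ?case by (simp add: numeral_2_eq_2)
next
  case (Suc N)
  have "det M = (\<Sum>j<Suc N. M $$ (0, j) * cofactor M 0 j)"
    using laplace_expansion_row[OF Suc.prems(1), of 0] by simp
  also have "\<dots> = M $$ (0, N) * cofactor M 0 N"
    using Suc.prems(2)[of 0] by (simp add: sum.lessThan_Suc)
  also have "cofactor M 0 N = (-1) ^ N * det (mat_delete M 0 N)"
    unfolding cofactor_def by simp
  also have "det (mat_delete M 0 N) = (-1) ^ (N choose 2) * (\<Prod>i<N. mat_delete M 0 N $$ (i, N - 1 - i))"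
  proof (rule Suc.IH)
    show "mat_delete M 0 N \<in> carrier_mat N N" using mat_delete_carrier[OF Suc.prems(1)] by simp
    fix i j assume "i < N" "j < N" "i + j + 1 < N"
    then show "mat_delete M 0 N $$ (i, j) = 0"
      using Suc.prems unfolding mat_delete_def by auto
  qed
  also have "(\<Prod>i<N. mat_delete M 0 N $$ (i, N - 1 - i)) = (\<Prod>i<N. M $$ (Suc i, N - 1 - i))"
    using Suc.prems(1) by (intro prod.cong) (auto simp: mat_delete_def)
  finally have "det M = (-1) ^ N * (-1) ^ (N choose 2)
      * (M $$ (0, Suc N - 1 - 0) * (\<Prod>i<N. M $$ (Suc i, Suc N - 1 - Suc i)))"
    by (simp add: algebra_simps)
  also have "M $$ (0, Suc N - 1 - 0) * (\<Prod>i<N. M $$ (Suc i, Suc N - 1 - Suc i))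
      = (\<Prod>i<Suc N. M $$ (i, Suc N - 1 - i))"
    by (rule prod.lessThan_Suc_shift[symmetric])
  also have "(-1) ^ N * (-1) ^ (N choose 2) = ((-1) ^ (Suc N choose 2) :: 'a)"
    by (simp add: power_add[symmetric] numeral_2_eq_2)
  finally show ?case .
qed

lemma gram_entry_add_self: "K \<ge> 1 \<Longrightarrow> gram_entry K (i + K) (j + K) = gram_entry K i j"
  unfolding gram_entry_def by auto

lemma gram_entry_across_blocks:
  assumes "K \<ge> 1" "i < K" "K \<le> j"
  shows "gram_entry K i j = 0" "gram_entry K j i = 0"
proof -
  have "j div K > 0" using assms by (simp add: div_greater_zero_iff)
  then show "gram_entry K i j = 0" "gram_entry K j i = 0" unfolding gram_entry_def using assms by auto
qed

lemma gram_mat_block_split: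
  assumes K: "K \<ge> 1"
  shows "gram_mat K (K + n) = four_block_mat (gram_mat K K) (0\<^sub>m K n) (0\<^sub>m n K) (gram_mat K n)"
proof (rule eq_matI)
  fix i j
  assume "i < dim_row (four_block_mat (gram_mat K K) (0\<^sub>m K n) (0\<^sub>m n K) (gram_mat K n))"
    and "j < dim_col (four_block_mat (gram_mat K K) (0\<^sub>m K n) (0\<^sub>m n K) (gram_mat K n))"
  moreover have "gram_entry K i j = gram_entry K (i - K) (j - K)" if "K \<le> i" "K \<le> j"
    using gram_entry_add_self[OF K, of "i - K" "j - K"] that by simp
  ultimately show "gram_mat K (K + n) $$ (i, j)
      = four_block_mat (gram_mat K K) (0\<^sub>m K n) (0\<^sub>m n K) (gram_mat K n) $$ (i, j)"
    using gram_entry_across_blocks[OF K, of i j] gram_entry_across_blocks[OF K, of j i]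
    unfolding gram_mat_def by auto
qed (auto simp: gram_mat_def)

lemma det_gram_mat_block:
  assumes K: "K \<ge> 1"
  shows "det (gram_mat K K) = (-1) ^ (K choose 2)"
proof -
  obtain K' where K': "K = Suc K'" using K by (cases K) auto
  define H where "H = mat K' K' (\<lambda>(i, j). gram_entry K (Suc i) (Suc j))"
  have split: "gram_mat K K = four_block_mat (mat 1 1 (\<lambda>_. 1)) (0\<^sub>m 1 K') (0\<^sub>m K' 1) H"
  proof (rule eq_matI)
    fix i j
    assume "i < dim_row (four_block_mat (mat 1 1 (\<lambda>_. 1 :: int)) (0\<^sub>m 1 K') (0\<^sub>m K' 1) H)"
      and "j < dim_col (four_block_mat (mat 1 1 (\<lambda>_. 1 :: int)) (0\<^sub>m 1 K') (0\<^sub>m K' 1) H)"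
    then have "i < K" "j < K" unfolding H_def K' by auto
    then show "gram_mat K K $$ (i, j) = four_block_mat (mat 1 1 (\<lambda>_. 1)) (0\<^sub>m 1 K') (0\<^sub>m K' 1) H $$ (i, j)"
      unfolding gram_mat_def H_def K' by (cases i; cases j) (auto simp: gram_entry_def)
  qed (auto simp: gram_mat_def H_def K')
  have "det (gram_mat K K) = det (mat 1 1 (\<lambda>_. 1 :: int)) * det H"
    unfolding split by (rule det_four_block_mat_lower_left_zero) (auto simp: H_def)
  also have "det (mat 1 1 (\<lambda>_. 1 :: int)) = 1" by (simp add: det_single)
  also have "det H = (-1) ^ (K' choose 2) * (\<Prod>i<K'. H $$ (i, K' - 1 - i))"
    by (rule det_zero_above_antidiagonal) (auto simp: H_def gram_entry_def K')
  also have "(\<Prod>i<K'. H $$ (i, K' - 1 - i)) = (\<Prod>i<K'. -1)"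
    by (rule prod.cong) (auto simp: H_def gram_entry_def K')
  also have "(-1::int) ^ (K' choose 2) * (\<Prod>i<K'. -1) = (-1) ^ (K choose 2)"
    by (simp add: K' power_add[symmetric] numeral_2_eq_2 add.commute)
  finally show ?thesis by simp
qed

lemma det_gram_mat_incomplete_block:
  assumes "2 \<le> n" "n < K"
  shows "det (gram_mat K n) = 0"
proof -
  have "det (gram_mat K n) = (\<Sum>j<n. gram_mat K n $$ (1, j) * cofactor (gram_mat K n) 1 j)"
    using assms by (intro laplace_expansion_row) (auto simp: gram_mat_def)
  also have "\<dots> = 0"
    using assms by (intro sum.neutral) (auto simp: gram_mat_def gram_entry_def)
  finally show ?thesis .
qed

lemma det_gram_mat:
  assumes K: "K \<ge> 1"
  shows "det (gram_mat K n) = (if n mod K = 0 \<or> n mod K = 1 then (-1) ^ (n div K * (K choose 2)) else 0)"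
proof (induction n rule: less_induct)
  case (less n)
  show ?case
  proof (cases "n < K")
    case True
    then consider "n = 0" | "n = 1" | "2 \<le> n" by linarith
    then show ?thesis
    proof cases
      case 3
      then show ?thesis using True by (simp add: det_gram_mat_incomplete_block)
    qed (use True in \<open>simp_all add: gram_mat_def det_single gram_entry_def\<close>)
  next
    case False
    then obtain n' where n: "n = K + n'" by (metis le_add_diff_inverse not_le)
    have "det (gram_mat K n) = det (gram_mat K K) * det (gram_mat K n')"
      unfolding n gram_mat_block_split[OF K]
      by (rule det_four_block_mat_lower_left_zero) (auto simp: gram_mat_def)
    also have "\<dots> = (-1) ^ (K choose 2)
        * (if n' mod K = 0 \<or> n' mod K = 1 then (-1) ^ (n' div K * (K choose 2)) else 0)"
      using det_gram_mat_block[OF K] less[of n'] K n by simp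
    also have "\<dots> = (if n mod K = 0 \<or> n mod K = 1 then (-1) ^ (n div K * (K choose 2)) else 0)"
      using K unfolding n by (simp add: power_add[symmetric] algebra_simps)
    finally show ?thesis .
  qed
qed

section \<open>Change of basis\<close>

lemma moment_mult_eval_xz:
  assumes "degree p < n" "degree q < n"
  shows "moment k (eval_xz p * eval_xz q)
    = (\<Sum>r<n. \<Sum>s<n. coeff p r * coeff q s * moment k (xz ^ (r + s)))"
proof -
  have "eval_xz p * eval_xz q = (\<Sum>r<n. \<Sum>s<n. of_int (coeff p r * coeff q s) * xz ^ (r + s))"
    unfolding eval_xz_eq_sum_powers[OF assms(1)] eval_xz_eq_sum_powers[OF assms(2)]
    by (simp add: sum_product algebra_simps power_add)
  then show ?thesis by (simp only: moment_sum moment_of_int_mult)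
qed

definition gram_basis_coeff_mat :: "nat \<Rightarrow> nat \<Rightarrow> int mat" where
  "gram_basis_coeff_mat K n = mat n n (\<lambda>(a, r). coeff (gram_basis K a) r)"

lemma det_gram_basis_coeff_mat:
  assumes "K \<ge> 1"
  shows "det (gram_basis_coeff_mat K n) = 1"
proof -
  have "det (gram_basis_coeff_mat K n) = prod_list (diag_mat (gram_basis_coeff_mat K n))"
    by (rule det_lower_triangular[of n])
      (auto simp: gram_basis_coeff_mat_def monic_deg_coeff_above[OF monic_deg_gram_basis[OF assms]])
  also have "diag_mat (gram_basis_coeff_mat K n) = map (\<lambda>_. 1) [0..<n]"
    by (simp add: diag_mat_def gram_basis_coeff_mat_def monic_deg_coeff[OF monic_deg_gram_basis[OF assms]])
  finally show ?thesis by (simp add: map_replicate_const)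
qed

lemma gram_basis_congruence:
  fixes K k n :: nat
  assumes K: "K = Suc k"
  defines "T \<equiv> gram_basis_coeff_mat K n"
  shows "T * mat n n (\<lambda>(i, j). moment k (xz ^ (i + j))) * transpose_mat T = gram_mat K n"
proof (rule eq_matI)
  fix a b
  assume "a < dim_row (gram_mat K n)" "b < dim_col (gram_mat K n)"
  then have ab: "a < n" "b < n" by (auto simp: gram_mat_def)
  have deg: "degree (gram_basis K c) < n" if "c < n" for c
    using monic_deg_gram_basis[of K c] K that by (simp add: monic_deg_def)
  have "(T * mat n n (\<lambda>(i, j). moment k (xz ^ (i + j))) * transpose_mat T) $$ (a, b)
      = (\<Sum>s<n. (\<Sum>r<n. coeff (gram_basis K a) r * moment k (xz ^ (r + s))) * coeff (gram_basis K b) s)"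
    using ab by (simp add: T_def gram_basis_coeff_mat_def scalar_prod_def atLeast0LessThan)
  also have "\<dots> = moment k (eval_xz (gram_basis K a) * eval_xz (gram_basis K b))"
    unfolding moment_mult_eval_xz[OF deg deg, OF ab] sum_distrib_right
    by (subst sum.swap) (simp add: mult_ac)
  also have "\<dots> = gram_mat K n $$ (a, b)"
    using ab by (simp add: moment_gram_basis[OF K] gram_mat_def)
  finally show "(T * mat n n (\<lambda>(i, j). moment k (xz ^ (i + j))) * transpose_mat T) $$ (a, b)
      = gram_mat K n $$ (a, b)" .
qed (auto simp: T_def gram_basis_coeff_mat_def gram_mat_def)

lemma det_congruence_det_one:
  fixes A T :: "'a :: comm_ring_1 mat"
  assumes "A \<in> carrier_mat n n" "T \<in> carrier_mat n n" "det T = 1"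
  shows "det (T * A * transpose_mat T) = det A"
  using assms by (simp add: det_mult[of _ n] det_transpose)

theorem corollary17:
  fixes n k :: nat
  assumes "n \<ge> 1"
  shows "det (mat n n (\<lambda>(i, j). \<Sum>l\<in>{-int k..int k + 1}. binom_int (2*i + 2*j) (int (i + j) + l)))
    = (if n mod (k + 1) = 0 then (-1) ^ ((n div (k + 1)) * ((k + 1) choose 2))
       else if n mod (k + 1) = 1 then (-1) ^ ((n div (k + 1)) * ((k + 1) choose 2))
       else 0)"
proof -
  define A where "A = mat n n (\<lambda>(i, j). moment k (xz ^ (i + j)))"
  have "mat n n (\<lambda>(i, j). \<Sum>l\<in>{-int k..int k + 1}. binom_int (2*i + 2*j) (int (i + j) + l)) = A"
    unfolding A_def by (rule eq_matI) (simp_all add: moment_xz_power algebra_simps)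
  moreover have "det A = det (gram_basis_coeff_mat (Suc k) n * A * transpose_mat (gram_basis_coeff_mat (Suc k) n))"
    using det_gram_basis_coeff_mat[of "Suc k" n]
    by (intro det_congruence_det_one[symmetric]) (auto simp: A_def gram_basis_coeff_mat_def)
  moreover have "\<dots> = det (gram_mat (Suc k) n)"
    unfolding A_def by (simp add: gram_basis_congruence)
  ultimately show ?thesis by (simp add: det_gram_mat)
qed

end
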